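(* Consider the $2\times 1$ merge network with parameters $c>0$, $k>0$, $\eta\in(0,\tfrac12)$, constant downstream queue length $Q\ge 0$, upstream capacities $c_1=c$, $c_2=kc$, inflows $f_i=\eta c_i$, and arbitrary weights $\gamma_0,\gamma_1,\gamma_2>0$, operated under the generalized backpressure rule. Suppose the network is in regime R1, with unsaturated upstream queue $u$ and saturated upstream queue $s$. Then the network converges to a steady state: there exists $t_0$ such that for all $t\ge t_0$, $$f_u\le q_u(t)\le 2f_u\qquad\text{and}\qquad q_{s,act}+(f_s-c_s)\le q_s(t)\le q_{s,act}+f_s,$$ where $$q_{s,act}=\frac{\gamma_0}{\gamma_s}\Big(1-\frac{c_u}{c_s}\Big)Q+\frac{\gamma_u c_u}{\gamma_s c_s}f_u .$$
   Context: Model: discrete time $t=0,1,2,\dots$; two upstream queues $q_1(t),q_2(t)\ge 0$ (indexed $i\in\{1,2\}$) merge into one downstream queue whose length is held constant at $Q$; $\gamma_0$ is the weight of the downstream queue. The generalized backpressure priority of upstream queue $i$ is $p_i(t)=(\gamma_i q_i(t)-\gamma_0 Q)c_i$. At each time step exactly one upstream queue is activated, one with maximal priority (ties broken arbitrarily); the activated queue evolves as $q_i(t+1)=q_i(t)-\min(q_i(t),c_i)+f_i$ and the non-activated one as $q_j(t+1)=q_j(t)+f_j$. A queue is in the unsaturated regime when its outflow $\min(q_i,c_i)$ equals $q_i<c_i$, and saturated when it equals $c_i$. Regime R1: exactly one upstream queue, denoted $u$, is unsaturated, and the other, denoted $s$, is saturated (it discharges its full capacity $c_s$ whenever activated). 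*)

theory Defs
  imports Complex_Main
begin

definition cap :: "real \<Rightarrow> real \<Rightarrow> nat \<Rightarrow> real" where
  "cap c k i = (if i = 1 then c else k * c)"

definition inflow :: "real \<Rightarrow> real \<Rightarrow> real \<Rightarrow> nat \<Rightarrow> real" where
  "inflow c k \<eta> i = \<eta> * cap c k i"

definition prio :: "(nat \<Rightarrow> real) \<Rightarrow> real \<Rightarrow> real \<Rightarrow> real \<Rightarrow> nat \<Rightarrow> real \<Rightarrow> real" where
  "prio \<gamma> Q c k i qi = (\<gamma> i * qi - \<gamma> 0 * Q) * cap c k i"

text \<open>Trajectory of the merge network under the generalized backpressure rule:
  q i t is the length of upstream queue i at time t, act t the queue activated at time t.\<close>
definition gbp_run :: "real \<Rightarrow> real \<Rightarrow> real \<Rightarrow> real \<Rightarrow> (nat \<Rightarrow> real)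
    \<Rightarrow> (nat \<Rightarrow> nat \<Rightarrow> real) \<Rightarrow> (nat \<Rightarrow> nat) \<Rightarrow> bool" where
  "gbp_run c k \<eta> Q \<gamma> q act \<longleftrightarrow>
     (\<forall>i\<in>{1,2}. q i 0 \<ge> 0) \<and>
     (\<forall>t. act t \<in> {1,2} \<and>
          (\<forall>j\<in>{1,2}. prio \<gamma> Q c k j (q j t) \<le> prio \<gamma> Q c k (act t) (q (act t) t)) \<and>
          (\<forall>i\<in>{1,2}. q i (Suc t) =
              (if act t = i then q i t - min (q i t) (cap c k i) + inflow c k \<eta> i
               else q i t + inflow c k \<eta> i)))"

definition regime_R1 :: "real \<Rightarrow> real \<Rightarrow> (nat \<Rightarrow> nat \<Rightarrow> real) \<Rightarrow> (nat \<Rightarrow> nat) \<Rightarrow> nat \<Rightarrow> nat \<Rightarrow> bool" where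
  "regime_R1 c k q act u s \<longleftrightarrow>
     {u, s} = {1, 2} \<and> u \<noteq> s \<and>
     (\<forall>t. act t = u \<longrightarrow> q u t < cap c k u) \<and>
     (\<forall>t. act t = s \<longrightarrow> q s t \<ge> cap c k s)"

end

theory Submission
  imports Defs
begin

text \<open>Write \<open>w\<^sub>u = \<gamma>\<^sub>u c\<^sub>u\<close> and \<open>w\<^sub>s = \<gamma>\<^sub>s c\<^sub>s\<close>. The priority gap is
  \<open>p\<^sub>s - p\<^sub>u = w\<^sub>s (q\<^sub>s - q\<^sub>s\<^sub>,\<^sub>a\<^sub>c\<^sub>t) - w\<^sub>u (q\<^sub>u - f\<^sub>u)\<close>, so \<open>u\<close> is served only when
  \<open>q\<^sub>s\<close> lies below a line through \<open>(f\<^sub>u, q\<^sub>s\<^sub>,\<^sub>a\<^sub>c\<^sub>t)\<close>, and \<open>s\<close> only when it lies above.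
  Serving the unsaturated queue empties it down to \<open>q\<^sub>u = f\<^sub>u\<close>; serving \<open>s\<close> lowers \<open>q\<^sub>s\<close> by
  \<open>c\<^sub>s - f\<^sub>s > f\<^sub>s\<close>. With \<open>z = q\<^sub>s - q\<^sub>s\<^sub>,\<^sub>a\<^sub>c\<^sub>t\<close>, the set where either \<open>q\<^sub>u = f\<^sub>u\<close> and
  \<open>2f\<^sub>s - c\<^sub>s \<le> z \<le> f\<^sub>s\<close>, or \<open>q\<^sub>u = 2f\<^sub>u\<close> and \<open>f\<^sub>s - c\<^sub>s \<le> z \<le> 2f\<^sub>s - c\<^sub>s\<close>, is invariant,
  and it is reached in finitely many steps: after the first service of \<open>u\<close>, the value of \<open>z\<close>
  at each later service of \<open>u\<close> moves monotonically towards the window \<open>[2f\<^sub>s - c\<^sub>s, f\<^sub>s]\<close>.\<close>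

locale r1_dynamics =
  fixes qu qs :: "nat \<Rightarrow> real" and u_active :: "nat \<Rightarrow> bool"
    and wu ws fu fs cs qsact :: real
  assumes wu_pos: "wu > 0" and ws_pos: "ws > 0"
    and fu_pos: "fu > 0" and fs_pos: "fs > 0" and cs_gt: "2 * fs < cs"
    and u_step: "\<And>t. u_active t \<Longrightarrow>
      qu (Suc t) = fu \<and> qs (Suc t) = qs t + fs \<and> ws * (qs t - qsact) \<le> wu * (qu t - fu)"
    and s_step: "\<And>t. \<not> u_active t \<Longrightarrow>
      qu (Suc t) = qu t + fu \<and> qs (Suc t) = qs t - cs + fs
      \<and> wu * (qu t - fu) \<le> ws * (qs t - qsact) \<and> cs \<le> qs t"
begin

definition steady :: "nat \<Rightarrow> bool" where
  "steady t \<longleftrightarrow>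
     (qu t = fu \<and> 2 * fs - cs \<le> qs t - qsact \<and> qs t - qsact \<le> fs) \<or>
     (qu t = 2 * fu \<and> fs - cs \<le> qs t - qsact \<and> qs t - qsact \<le> 2 * fs - cs)"

lemma u_active_if_below:
  assumes "qu t = fu" "qs t < qsact" shows "u_active t"
proof (rule ccontr)
  assume "\<not> u_active t"
  from s_step[OF this] assms(1) have "0 \<le> ws * (qs t - qsact)" by simp
  with ws_pos assms(2) show False by (simp add: zero_le_mult_iff)
qed

lemma s_active_if_above:
  assumes "qu t = fu" "qs t > qsact" shows "\<not> u_active t"
proof
  assume "u_active t"
  from u_step[OF this] assms(1) have "ws * (qs t - qsact) \<le> 0" by simp
  with ws_pos assms(2) show False by (simp add: mult_le_0_iff)
qed

lemma steady_Suc: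
  assumes "steady t" shows "steady (Suc t)"
proof (cases "qu t = fu")
  case True
  with assms have z: "2 * fs - cs \<le> qs t - qsact" "qs t - qsact \<le> fs"
    unfolding steady_def using fu_pos by auto
  show ?thesis
  proof (cases "u_active t")
    case u: True
    with True s_active_if_above have "qs t \<le> qsact" by fastforce
    with u_step[OF u] z fs_pos show ?thesis unfolding steady_def by auto
  next
    case s: False
    with True u_active_if_below have "qs t \<ge> qsact" by fastforce
    with s_step[OF s] True z show ?thesis unfolding steady_def by auto
  qed
next
  case False
  with assms have x2: "qu t = 2 * fu" and z: "fs - cs \<le> qs t - qsact" "qs t - qsact \<le> 2 * fs - cs"
    unfolding steady_def by auto
  have "u_active t"
  proof (rule ccontr)
    assume "\<not> u_active t"
    from s_step[OF this] x2 have "wu * fu \<le> ws * (qs t - qsact)" by simp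
    moreover have "ws * (qs t - qsact) < 0" using z cs_gt ws_pos by (simp add: mult_pos_neg)
    moreover have "0 < wu * fu" using wu_pos fu_pos by simp
    ultimately show False by linarith
  qed
  from u_step[OF this] z cs_gt show ?thesis unfolding steady_def by auto
qed

lemma steady_forever:
  assumes "steady t0" "t0 \<le> t" shows "steady t"
  using assms(2) by (induction t rule: dec_induct) (use assms(1) steady_Suc in auto)

lemma s_run:
  assumes "\<And>j. t \<le> j \<Longrightarrow> j < t + m \<Longrightarrow> \<not> u_active j"
  shows "qu (t + m) = qu t + real m * fu \<and> qs (t + m) = qs t - real m * (cs - fs)"
  using assms
proof (induction m)
  case (Suc m)
  then have "\<not> u_active (t + m)" by simp
  from s_step[OF this] Suc show ?case by (simp add: algebra_simps)
qed simp

text \<open>While \<open>s\<close> is served, \<open>q\<^sub>s\<close> drops by \<open>c\<^sub>s - f\<^sub>s > 0\<close> per step, but it is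
  never served below \<open>c\<^sub>s\<close>.\<close>
lemma next_u_activation:
  "\<exists>t'\<ge>t. u_active t' \<and> (\<forall>j. t \<le> j \<and> j < t' \<longrightarrow> \<not> u_active j)"
proof -
  have "\<exists>t'\<ge>t. u_active t' \<and> (\<forall>j. t \<le> j \<and> j < t' \<longrightarrow> \<not> u_active j)"
    if "qs t < cs + real n * (cs - fs)" for n t
    using that
  proof (induction n arbitrary: t)
    case 0
    then have "u_active t" using s_step by force
    then show ?case by auto
  next
    case (Suc n)
    show ?case
    proof (cases "u_active t")
      case False
      then have "qs (Suc t) < cs + real n * (cs - fs)"
        using s_step[OF False] Suc.prems by (simp add: algebra_simps)
      from Suc.IH[OF this] obtain t' where
        "t' \<ge> Suc t" "u_active t'" "\<forall>j. Suc t \<le> j \<and> j < t' \<longrightarrow> \<not> u_active j"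
        by blast
      with False show ?thesis by (metis Suc_leD le_antisym not_less_eq_eq)
    qed auto
  qed
  moreover obtain n :: nat where "(qs t - cs) / (cs - fs) < n"
    using reals_Archimedean2 by blast
  then have "qs t < cs + real n * (cs - fs)"
    using cs_gt fs_pos by (simp add: field_simps)
  ultimately show ?thesis by blast
qed

lemma steady_reached_from_below:
  assumes "qu t = fu" "qs t - qsact \<le> fs" "2 * fs - cs - real n * fs \<le> qs t - qsact"
  shows "\<exists>t'\<ge>t. steady t'"
  using assms
proof (induction n arbitrary: t)
  case (Suc n)
  show ?case
  proof (cases "2 * fs - cs \<le> qs t - qsact")
    case False
    with cs_gt have "u_active t" using u_active_if_below Suc.prems(1) by simp
    from u_step[OF this] False Suc.prems cs_gt obtain t' where "t' \<ge> Suc t" "steady t'"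
      using Suc.IH[of "Suc t"] by (fastforce simp: algebra_simps)
    then show ?thesis by (meson Suc_leD)
  qed (use Suc.prems steady_def in auto)
qed (auto simp: steady_def)

text \<open>From \<open>z > f\<^sub>s\<close>, the stretch of \<open>s\<close>-services up to the next service of \<open>u\<close>
  ends with \<open>z\<close> in \<open>[2f\<^sub>s - c\<^sub>s, z - (c\<^sub>s - 2f\<^sub>s)]\<close>: the last \<open>s\<close>-service happens
  with \<open>q\<^sub>u \<ge> f\<^sub>u\<close>, hence with \<open>z \<ge> 0\<close>.\<close>
lemma steady_reached_from_above:
  assumes "qu t = fu" "2 * fs - cs \<le> qs t - qsact" "qs t - qsact \<le> fs + real n * (cs - 2 * fs)"
  shows "\<exists>t'\<ge>t. steady t'"
  using assms
proof (induction n arbitrary: t)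
  case (Suc n)
  show ?case
  proof (cases "qs t - qsact \<le> fs")
    case False
    with fs_pos have "\<not> u_active t" using s_active_if_above Suc.prems(1) by simp
    obtain t' where t': "t' \<ge> t" "u_active t'" "\<forall>j. t \<le> j \<and> j < t' \<longrightarrow> \<not> u_active j"
      using next_u_activation by blast
    with \<open>\<not> u_active t\<close> obtain m where m: "t' = t + Suc m"
      by (metis add_Suc_right le_Suc_ex less_imp_Suc_add nat_less_le)
    have run_m: "qu (t + m) = qu t + real m * fu" "qs (t + m) = qs t - real m * (cs - fs)"
      using s_run[of t m] t' m by auto
    have run_Suc_m: "qs t' = qs t - real (Suc m) * (cs - fs)"
      using s_run[of t "Suc m"] t' m by auto
    have "\<not> u_active (t + m)" using t' m by auto
    from s_step[OF this] run_m Suc.prems(1)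
    have "wu * (real m * fu) \<le> ws * (qs t - real m * (cs - fs) - qsact)" by simp
    moreover have "0 \<le> wu * (real m * fu)" using wu_pos fu_pos by simp
    ultimately have last_s: "0 \<le> qs t - real m * (cs - fs) - qsact"
      using ws_pos by (smt (verit) zero_le_mult_iff)
    have next_u: "qu (Suc t') = fu" "qs (Suc t') = qs t - real (Suc m) * (cs - fs) + fs"
      using u_step[OF t'(2)] run_Suc_m by auto
    have "real (Suc m) * (cs - fs) \<ge> cs - fs" using cs_gt fs_pos by simp
    then obtain t'' where "t'' \<ge> Suc t'" "steady t''"
      using Suc.IH[of "Suc t'"] next_u last_s Suc.prems by (fastforce simp: algebra_simps)
    with t'(1) show ?thesis by (intro exI[of _ t'']) auto
  qed (use Suc.prems steady_def in auto)
qed (auto simp: steady_def)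

lemma steady_reached: "\<exists>t0. steady t0"
proof -
  obtain t1 where "u_active t1" using next_u_activation by blast
  with u_step have at_fu: "qu (Suc t1) = fu" by simp
  show ?thesis
  proof (cases "qs (Suc t1) - qsact \<le> fs")
    case True
    obtain n :: nat where "(2 * fs - cs - (qs (Suc t1) - qsact)) / fs < n"
      using reals_Archimedean2 by blast
    with fs_pos have "2 * fs - cs - real n * fs \<le> qs (Suc t1) - qsact"
      by (simp add: field_simps)
    then show ?thesis using steady_reached_from_below[OF at_fu True] by blast
  next
    case False
    obtain n :: nat where "(qs (Suc t1) - qsact - fs) / (cs - 2 * fs) < n"
      using reals_Archimedean2 by blast
    with cs_gt have "qs (Suc t1) - qsact \<le> fs + real n * (cs - 2 * fs)"
      by (simp add: field_simps)
    moreover have "2 * fs - cs \<le> qs (Suc t1) - qsact" using False cs_gt fs_pos by simp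
    ultimately show ?thesis using steady_reached_from_above[OF at_fu] by blast
  qed
qed

lemma eventually_steady_bounds:
  "\<exists>t0. \<forall>t\<ge>t0. fu \<le> qu t \<and> qu t \<le> 2 * fu \<and>
                qsact + (fs - cs) \<le> qs t \<and> qs t \<le> qsact + fs"
proof -
  obtain t0 where "steady t0" using steady_reached by blast
  with steady_forever have "\<forall>t\<ge>t0. steady t" by blast
  with fu_pos fs_pos cs_gt show ?thesis unfolding steady_def by (intro exI[of _ t0]) force
qed

end

definition steady_level :: "(nat \<Rightarrow> real) \<Rightarrow> real \<Rightarrow> real \<Rightarrow> real \<Rightarrow> real \<Rightarrow> nat \<Rightarrow> nat \<Rightarrow> real" where
  "steady_level \<gamma> Q c k \<eta> u s =
     \<gamma> 0 / \<gamma> s * (1 - cap c k u / cap c k s) * Q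
     + (\<gamma> u * cap c k u) / (\<gamma> s * cap c k s) * inflow c k \<eta> u"

lemma cap_pos: "c > 0 \<Longrightarrow> k > 0 \<Longrightarrow> cap c k i > 0"
  unfolding cap_def by simp

lemma prio_difference:
  assumes "\<gamma> s \<noteq> 0" "cap c k s \<noteq> 0"
  shows "prio \<gamma> Q c k s y - prio \<gamma> Q c k u x
    = \<gamma> s * cap c k s * (y - steady_level \<gamma> Q c k \<eta> u s)
      - \<gamma> u * cap c k u * (x - inflow c k \<eta> u)"
  using assms unfolding prio_def steady_level_def by (simp add: field_simps)

lemma r1_dynamics_of_gbp_run:
  assumes "c > 0" "k > 0" "0 < \<eta>" "\<eta> < 1/2" "\<gamma> 1 > 0" "\<gamma> 2 > 0"
    and run: "gbp_run c k \<eta> Q \<gamma> q act" and R1: "regime_R1 c k q act u s"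
  shows "r1_dynamics (q u) (q s) (\<lambda>t. act t = u) (\<gamma> u * cap c k u) (\<gamma> s * cap c k s)
           (inflow c k \<eta> u) (inflow c k \<eta> s) (cap c k s) (steady_level \<gamma> Q c k \<eta> u s)"
proof -
  have us: "u \<in> {1, 2}" "s \<in> {1, 2}" "u \<noteq> s"
    using R1 unfolding regime_R1_def by auto
  have \<gamma>_pos: "\<gamma> u > 0" "\<gamma> s > 0" using us assms(5,6) by auto
  have caps: "cap c k u > 0" "cap c k s > 0" using cap_pos assms(1,2) by auto
  have gap: "prio \<gamma> Q c k s y - prio \<gamma> Q c k u x
      = \<gamma> s * cap c k s * (y - steady_level \<gamma> Q c k \<eta> u s)
        - \<gamma> u * cap c k u * (x - inflow c k \<eta> u)" for x y
    using prio_difference \<gamma>_pos caps by simp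
  have act_us: "act t = u \<or> act t = s"
    and max_prio: "prio \<gamma> Q c k j (q j t) \<le> prio \<gamma> Q c k (act t) (q (act t) t)"
    and next_u: "q u (Suc t) = (if act t = u then q u t - min (q u t) (cap c k u) + inflow c k \<eta> u
                                else q u t + inflow c k \<eta> u)"
    and next_s: "q s (Suc t) = (if act t = s then q s t - min (q s t) (cap c k s) + inflow c k \<eta> s
                                else q s t + inflow c k \<eta> s)"
    if "j \<in> {1, 2}" for j t
    using run R1 us that unfolding gbp_run_def regime_R1_def by blast+
  show ?thesis
  proof
    show "\<gamma> u * cap c k u > 0" "\<gamma> s * cap c k s > 0" using \<gamma>_pos caps by auto
    show "inflow c k \<eta> u > 0" "inflow c k \<eta> s > 0" using caps assms(3) by (auto simp: inflow_def)
    show "2 * inflow c k \<eta> s < cap c k s" using caps assms(4) by (simp add: inflow_def)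
  next
    fix t assume a: "act t = u"
    have "q u t < cap c k u" using R1 a unfolding regime_R1_def by blast
    moreover have "prio \<gamma> Q c k s (q s t) \<le> prio \<gamma> Q c k u (q u t)"
      using max_prio[of s t] a us by simp
    ultimately show "q u (Suc t) = inflow c k \<eta> u \<and> q s (Suc t) = q s t + inflow c k \<eta> s \<and>
      \<gamma> s * cap c k s * (q s t - steady_level \<gamma> Q c k \<eta> u s)
        \<le> \<gamma> u * cap c k u * (q u t - inflow c k \<eta> u)"
      using next_u[of 1 t] next_s[of 1 t] a us gap[of "q s t" "q u t"] by simp
  next
    fix t assume "act t \<noteq> u"
    with act_us[of 1 t] have a: "act t = s" by simp
    have "cap c k s \<le> q s t" using R1 a unfolding regime_R1_def by blast
    moreover have "prio \<gamma> Q c k u (q u t) \<le> prio \<gamma> Q c k s (q s t)"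
      using max_prio[of u t] a us by simp
    ultimately show "q u (Suc t) = q u t + inflow c k \<eta> u \<and>
      q s (Suc t) = q s t - cap c k s + inflow c k \<eta> s \<and>
      \<gamma> u * cap c k u * (q u t - inflow c k \<eta> u)
        \<le> \<gamma> s * cap c k s * (q s t - steady_level \<gamma> Q c k \<eta> u s) \<and> cap c k s \<le> q s t"
      using next_u[of 1 t] next_s[of 1 t] a us gap[of "q s t" "q u t"] by simp
  qed
qed

theorem theorem1:
  fixes c k \<eta> Q :: real and \<gamma> :: "nat \<Rightarrow> real"
    and q :: "nat \<Rightarrow> nat \<Rightarrow> real" and act :: "nat \<Rightarrow> nat" and u s :: nat
  assumes "c > 0" "k > 0" "0 < \<eta>" "\<eta> < 1/2" "Q \<ge> 0"
    and "\<gamma> 0 > 0" "\<gamma> 1 > 0" "\<gamma> 2 > 0"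
    and "gbp_run c k \<eta> Q \<gamma> q act"
    and "regime_R1 c k q act u s"
  shows "\<exists>t0. \<forall>t\<ge>t0.
     inflow c k \<eta> u \<le> q u t \<and> q u t \<le> 2 * inflow c k \<eta> u \<and>
     (let qsact = \<gamma> 0 / \<gamma> s * (1 - cap c k u / cap c k s) * Q
                  + (\<gamma> u * cap c k u) / (\<gamma> s * cap c k s) * inflow c k \<eta> u
      in qsact + (inflow c k \<eta> s - cap c k s) \<le> q s t \<and> q s t \<le> qsact + inflow c k \<eta> s)"
proof -
  interpret r1_dynamics "q u" "q s" "\<lambda>t. act t = u" "\<gamma> u * cap c k u" "\<gamma> s * cap c k s"
    "inflow c k \<eta> u" "inflow c k \<eta> s" "cap c k s" "steady_level \<gamma> Q c k \<eta> u s"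
    using r1_dynamics_of_gbp_run assms(1-4,7-10) .
  from eventually_steady_bounds show ?thesis
    unfolding steady_level_def Let_def by (simp add: algebra_simps)
qed

end
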